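(* Let $G$ be a graph with maximum degree $2$ and let $k\ge2$ be an integer. Then the number of components of $G$ that are paths with at least $k-1$ vertices equals $s(G,P_{k-1})-s(G,P_k)-k\,s(G,C_k)$.
   Context: $P_j$ and $C_j$ denote the path and cycle with $j$ vertices; $s(G,H)$ is the number of vertex subsets $X\subseteq V(G)$ such that $G[X]$ is isomorphic to $H$; by convention $s(G,C_2)=0$. *)

theory Defs
  imports Main
begin

definition simple_graph :: "'a set \<Rightarrow> ('a \<Rightarrow> 'a \<Rightarrow> bool) \<Rightarrow> bool" where
  "simple_graph V E \<longleftrightarrow> finite V \<and> (\<forall>x y. E x y \<longrightarrow> x \<in> V \<and> y \<in> V)
     \<and> (\<forall>x y. E x y \<longrightarrow> E y x) \<and> (\<forall>x. \<not> E x x)"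

definition degree :: "('a \<Rightarrow> 'a \<Rightarrow> bool) \<Rightarrow> 'a \<Rightarrow> nat" where
  "degree E v = card {u. E v u}"

definition max_degree_le :: "'a set \<Rightarrow> ('a \<Rightarrow> 'a \<Rightarrow> bool) \<Rightarrow> nat \<Rightarrow> bool" where
  "max_degree_le V E d \<longleftrightarrow> (\<forall>v\<in>V. degree E v \<le> d)"

definition induced_iso :: "('a \<Rightarrow> 'a \<Rightarrow> bool) \<Rightarrow> 'a set \<Rightarrow> ('b \<Rightarrow> 'b \<Rightarrow> bool) \<Rightarrow> 'b set \<Rightarrow> bool" where
  "induced_iso E X F Y \<longleftrightarrow> (\<exists>f. bij_betw f X Y \<and> (\<forall>x\<in>X. \<forall>y\<in>X. E x y \<longleftrightarrow> F (f x) (f y)))"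

definition sub_count :: "'a set \<Rightarrow> ('a \<Rightarrow> 'a \<Rightarrow> bool) \<Rightarrow> 'b set \<Rightarrow> ('b \<Rightarrow> 'b \<Rightarrow> bool) \<Rightarrow> nat" where
  "sub_count V E W F = card {X. X \<subseteq> V \<and> induced_iso E X F W}"

definition path_verts :: "nat \<Rightarrow> nat set" where
  "path_verts j = {0..<j}"
definition path_edge :: "nat \<Rightarrow> nat \<Rightarrow> nat \<Rightarrow> bool" where
  "path_edge j a b \<longleftrightarrow> a < j \<and> b < j \<and> (b = a + 1 \<or> a = b + 1)"

definition cycle_edge :: "nat \<Rightarrow> nat \<Rightarrow> nat \<Rightarrow> bool" where
  "cycle_edge j a b \<longleftrightarrow> a < j \<and> b < j \<and> (b = (a + 1) mod j \<or> a = (b + 1) mod j)"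

definition cycle_count :: "'a set \<Rightarrow> ('a \<Rightarrow> 'a \<Rightarrow> bool) \<Rightarrow> nat \<Rightarrow> nat" where
  "cycle_count V E j = (if j \<le> 2 then 0 else sub_count V E {0..<j} (cycle_edge j))"

definition path_count :: "'a set \<Rightarrow> ('a \<Rightarrow> 'a \<Rightarrow> bool) \<Rightarrow> nat \<Rightarrow> nat" where
  "path_count V E j = sub_count V E (path_verts j) (path_edge j)"

definition components :: "'a set \<Rightarrow> ('a \<Rightarrow> 'a \<Rightarrow> bool) \<Rightarrow> 'a set set" where
  "components V E = (\<lambda>v. {u. E\<^sup>*\<^sup>* v u}) ` V"

definition long_path_components :: "'a set \<Rightarrow> ('a \<Rightarrow> 'a \<Rightarrow> bool) \<Rightarrow> nat \<Rightarrow> nat" where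
  "long_path_components V E m = card {C \<in> components V E.
      \<exists>j\<ge>m. induced_iso E C (path_edge j) (path_verts j)}"

end

theory Submission
  imports Defs
begin

text \<open>A graph of maximum degree two is a disjoint union of induced paths and cycles: a longest
  path in a component either is the whole component or closes up to a cycle.  Since P(k-1), P(k)
  and C(k) are connected, every induced copy of them lies in a single component, so both sides of
  the identity are sums over components.  An induced path or cycle inside P(n) or C(n) consists of
  consecutive vertices: P(n) contains n + 1 - j copies of P(j) and no cycle, while C(n) contains
  n copies of P(j) for j < n, none for j \<ge> n, and one copy of C(k) exactly when k = n.  Hence
  a component contributes 1 if it is a path with at least k - 1 vertices and 0 otherwise.\<close>

section \<open>Induced isomorphisms and numberings\<close>

definition numbering ::
    "('a \<Rightarrow> 'a \<Rightarrow> bool) \<Rightarrow> 'a set \<Rightarrow> (nat \<Rightarrow> nat \<Rightarrow> bool) \<Rightarrow> nat \<Rightarrow> (nat \<Rightarrow> 'a) \<Rightarrow> bool" where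
  "numbering E X P n g \<longleftrightarrow> bij_betw g {0..<n} X \<and> (\<forall>a<n. \<forall>b<n. E (g a) (g b) \<longleftrightarrow> P a b)"

lemma induced_iso_sym:
  assumes "induced_iso E X F Y"
  shows "induced_iso F Y E X"
proof -
  obtain f where f: "bij_betw f X Y" "\<forall>x\<in>X. \<forall>y\<in>X. E x y \<longleftrightarrow> F (f x) (f y)"
    using assms unfolding induced_iso_def by blast
  have "E (inv_into X f a) (inv_into X f b) \<longleftrightarrow> F a b" if "a \<in> Y" "b \<in> Y" for a b
  proof -
    have "inv_into X f a \<in> X" "inv_into X f b \<in> X"
      using f(1) that by (auto simp: bij_betw_def inv_into_into)
    moreover have "f (inv_into X f a) = a" "f (inv_into X f b) = b"
      using f(1) that by (auto simp: bij_betw_inv_into_right)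
    ultimately show ?thesis
      using f(2) by metis
  qed
  with bij_betw_inv_into[OF f(1)] show ?thesis
    unfolding induced_iso_def by blast
qed

lemma induced_iso_trans:
  assumes "induced_iso E X F Y" and "induced_iso F Y G Z"
  shows "induced_iso E X G Z"
proof -
  obtain f where f: "bij_betw f X Y" "\<forall>x\<in>X. \<forall>y\<in>X. E x y \<longleftrightarrow> F (f x) (f y)"
    using assms(1) unfolding induced_iso_def by blast
  obtain h where h: "bij_betw h Y Z" "\<forall>x\<in>Y. \<forall>y\<in>Y. F x y \<longleftrightarrow> G (h x) (h y)"
    using assms(2) unfolding induced_iso_def by blast
  have "E x y \<longleftrightarrow> G ((h \<circ> f) x) ((h \<circ> f) y)" if "x \<in> X" "y \<in> X" for x y
  proof -
    have "f x \<in> Y" "f y \<in> Y"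
      using f(1) that by (auto simp: bij_betw_apply)
    then show ?thesis
      using f(2) h(2) that by simp
  qed
  with bij_betw_trans[OF f(1) h(1)] show ?thesis
    unfolding induced_iso_def by blast
qed

lemma induced_iso_card: "induced_iso E X F Y \<Longrightarrow> card X = card Y"
  unfolding induced_iso_def using bij_betw_same_card by blast

lemma induced_iso_refl: "induced_iso E X E X"
  unfolding induced_iso_def by (intro exI[of _ id]) simp

lemma numbering_iff_induced_iso: "(\<exists>g. numbering E X P n g) \<longleftrightarrow> induced_iso P {0..<n} E X"
  unfolding numbering_def induced_iso_def by auto

lemma induced_iso_numbering: "induced_iso E X P {0..<n} \<longleftrightarrow> (\<exists>g. numbering E X P n g)"
  using induced_iso_sym numbering_iff_induced_iso by metis

lemma numbering_edge: "numbering E X P n g \<Longrightarrow> a < n \<Longrightarrow> b < n \<Longrightarrow> E (g a) (g b) \<longleftrightarrow> P a b"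
  unfolding numbering_def by blast

lemma numbering_image: "numbering E X P n g \<Longrightarrow> g ` {0..<n} = X"
  unfolding numbering_def bij_betw_def by blast

lemma numbering_card: "numbering E X P n g \<Longrightarrow> card X = n"
  unfolding numbering_def by (metis bij_betw_same_card card_atLeastLessThan diff_zero)

lemma numbering_cong:
  assumes "numbering E X P n g" and "\<And>a. a < n \<Longrightarrow> g a = h a"
  shows "numbering E X P n h"
  using assms bij_betw_cong[of "{0..<n}" g h X] unfolding numbering_def by simp

lemma numbering_restrict:
  assumes "numbering E X P n g" and "Y \<subseteq> {0..<n}"
  shows "induced_iso P Y E (g ` Y)"
proof -
  have "bij_betw g Y (g ` Y)"
    using assms unfolding numbering_def bij_betw_def by (auto intro: inj_on_subset)
  moreover have "\<forall>a\<in>Y. \<forall>b\<in>Y. P a b \<longleftrightarrow> E (g a) (g b)"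
    using assms unfolding numbering_def by (auto simp: subset_iff)
  ultimately show ?thesis
    unfolding induced_iso_def by blast
qed

lemma numbering_induced_iso_image:
  assumes "numbering E X P n g" and "Y \<subseteq> {0..<n}"
  shows "induced_iso E (g ` Y) F W \<longleftrightarrow> induced_iso P Y F W"
  using numbering_restrict[OF assms] induced_iso_sym induced_iso_trans by metis

lemma sub_count_numbering:
  assumes g: "numbering E X P n g"
  shows "sub_count X E W F = sub_count {0..<n} P W F"
proof -
  have inj: "inj_on g {0..<n}"
    using g unfolding numbering_def bij_betw_def by blast
  have "{Z. Z \<subseteq> X \<and> induced_iso E Z F W} = (`) g ` {Y. Y \<subseteq> {0..<n} \<and> induced_iso P Y F W}"
  proof (intro equalityI subsetI)
    fix Z assume Z: "Z \<in> {Z. Z \<subseteq> X \<and> induced_iso E Z F W}"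
    define Y where "Y = {a \<in> {0..<n}. g a \<in> Z}"
    have "Y \<subseteq> {0..<n}" and "g ` Y = Z"
      using Z numbering_image[OF g] unfolding Y_def by auto
    with Z numbering_induced_iso_image[OF g] show "Z \<in> (`) g ` {Y. Y \<subseteq> {0..<n} \<and> induced_iso P Y F W}"
      by blast
  next
    fix Z assume "Z \<in> (`) g ` {Y. Y \<subseteq> {0..<n} \<and> induced_iso P Y F W}"
    with numbering_induced_iso_image[OF g] numbering_image[OF g]
    show "Z \<in> {Z. Z \<subseteq> X \<and> induced_iso E Z F W}"
      by blast
  qed
  moreover have "inj_on ((`) g) {Y. Y \<subseteq> {0..<n} \<and> induced_iso P Y F W}"
    using inj_on_image_eq_iff[OF inj] by (auto intro: inj_onI)
  ultimately show ?thesis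
    unfolding sub_count_def by (simp add: card_image)
qed

lemma chain_direction:
  assumes inj: "inj_on f {0..<j}" and inj_s: "inj_on s (f ` {0..<j})"
    and step: "\<And>a. Suc a < j \<Longrightarrow> f (Suc a) = s (f a) \<or> f a = s (f (Suc a))"
  shows "(\<forall>a. Suc a < j \<longrightarrow> f (Suc a) = s (f a)) \<or> (\<forall>a. Suc a < j \<longrightarrow> f a = s (f (Suc a)))"
proof -
  have forward: "f (Suc (Suc a)) = s (f (Suc a))"
    if "Suc (Suc a) < j" "f (Suc a) = s (f a)" for a
  proof -
    have "f (Suc a) \<noteq> s (f (Suc (Suc a)))"
      using that inj_onD[OF inj, of a "Suc (Suc a)"] inj_onD[OF inj_s, of "f a" "f (Suc (Suc a))"]
      by auto
    with step[OF that(1)] show ?thesis by auto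
  qed
  have backward: "f (Suc a) = s (f (Suc (Suc a)))"
    if "Suc (Suc a) < j" "f a = s (f (Suc a))" for a
    using step[OF that(1)] that inj_onD[OF inj, of a "Suc (Suc a)"] by auto
  consider "j \<le> 1" | "f 1 = s (f 0)" | "f 0 = s (f 1)"
    using step[of 0] by force
  then show ?thesis
  proof cases
    case 2
    have "Suc a < j \<longrightarrow> f (Suc a) = s (f a)" for a
      by (induction a) (use 2 forward in auto)
    then show ?thesis by blast
  next
    case 3
    have "Suc a < j \<longrightarrow> f a = s (f (Suc a))" for a
      by (induction a) (use 3 backward in auto)
    then show ?thesis by blast
  qed auto
qed

lemma numbering_along_successor:
  assumes g: "numbering E X P j g"
    and P_rev: "\<And>a b. a < j \<Longrightarrow> b < j \<Longrightarrow> P (j - 1 - a) (j - 1 - b) \<longleftrightarrow> P a b"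
    and P_step: "\<And>a. Suc a < j \<Longrightarrow> P a (Suc a)"
    and inj_s: "inj_on s X"
    and E_s: "\<And>x y. E x y \<Longrightarrow> y = s x \<or> x = s y"
  obtains h where "numbering E X P j h" and "\<And>a. Suc a < j \<Longrightarrow> h (Suc a) = s (h a)"
proof -
  have inj: "inj_on g {0..<j}" and img: "g ` {0..<j} = X"
    using g unfolding numbering_def bij_betw_def by auto
  have "g (Suc a) = s (g a) \<or> g a = s (g (Suc a))" if "Suc a < j" for a
  proof -
    have "E (g a) (g (Suc a))"
      using g P_step[OF that] that unfolding numbering_def by auto
    moreover have "g a \<in> X" "g (Suc a) \<in> X"
      using img that by auto
    ultimately show ?thesis
      using E_s by blast
  qed
  from chain_direction[OF inj _ this] img inj_s
  consider "\<forall>a. Suc a < j \<longrightarrow> g (Suc a) = s (g a)" | "\<forall>a. Suc a < j \<longrightarrow> g a = s (g (Suc a))"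
    by auto
  then show ?thesis
  proof cases
    case 1
    with g that show ?thesis by blast
  next
    case 2
    define h where "h a = g (j - 1 - a)" for a
    have "bij_betw (\<lambda>a. j - 1 - a) {0..<j} {0..<j}"
      by (rule bij_betw_byWitness[where f'="\<lambda>a. j - 1 - a"]) auto
    then have "bij_betw h {0..<j} X"
      using bij_betw_trans[OF _ conjunct1[OF g[unfolded numbering_def]]]
      unfolding h_def by (simp add: comp_def)
    moreover have "E (h a) (h b) \<longleftrightarrow> P a b" if "a < j" "b < j" for a b
      using g P_rev[OF that] that unfolding numbering_def h_def by auto
    moreover have "h (Suc a) = s (h a)" if "Suc a < j" for a
    proof -
      have "Suc (j - 1 - Suc a) = j - 1 - a" "j - 1 - a < j"
        using that by auto
      with 2 have "g (j - 1 - Suc a) = s (g (j - 1 - a))"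
        by metis
      then show ?thesis
        unfolding h_def .
    qed
    ultimately show ?thesis
      using that unfolding numbering_def by blast
  qed
qed

section \<open>Induced paths and cycles inside paths and cycles\<close>

lemma path_edge_reverse: "a < j \<Longrightarrow> b < j \<Longrightarrow> path_edge j (j - 1 - a) (j - 1 - b) \<longleftrightarrow> path_edge j a b"
  unfolding path_edge_def by auto

lemma path_edge_Suc: "Suc a < j \<Longrightarrow> path_edge j a (Suc a)"
  unfolding path_edge_def by auto

lemma path_edge_cases: "path_edge n x y \<Longrightarrow> y = Suc x \<or> x = Suc y"
  unfolding path_edge_def by auto

lemma cycle_edge_Suc: "Suc a < j \<Longrightarrow> cycle_edge j a (Suc a)"
  unfolding cycle_edge_def by auto

lemma cycle_edge_cases: "cycle_edge n x y \<Longrightarrow> y = (x + 1) mod n \<or> x = (y + 1) mod n"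
  unfolding cycle_edge_def by auto

lemma cycle_edge_first_last: "3 \<le> n \<Longrightarrow> cycle_edge n 0 (n - 1)"
  unfolding cycle_edge_def by auto

lemma Suc_mod_eq_if:
  fixes c n :: nat
  shows "c < n \<Longrightarrow> (c + 1) mod n = (if c + 1 < n then c + 1 else 0)"
  by (metis Suc_eq_plus1 Suc_lessI mod_less mod_self)

lemma cycle_edge_less_iff:
  assumes "a < b" "b < n"
  shows "cycle_edge n a b \<longleftrightarrow> b = Suc a \<or> (a = 0 \<and> b = n - 1)"
  using assms Suc_mod_eq_if[OF assms(2)] unfolding cycle_edge_def by auto

lemma cycle_edge_commute: "cycle_edge n a b \<longleftrightarrow> cycle_edge n b a"
  unfolding cycle_edge_def by auto

lemma cycle_edge_loop_iff:
  assumes "c < n"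
  shows "cycle_edge n c c \<longleftrightarrow> n = 1"
proof -
  have "cycle_edge n c c \<longleftrightarrow> c = (c + 1) mod n"
    using assms unfolding cycle_edge_def by blast
  with Suc_mod_eq_if[OF assms] assms show ?thesis
    by auto
qed

lemma cycle_edge_reverse:
  assumes "a < j" "b < j"
  shows "cycle_edge j (j - 1 - a) (j - 1 - b) \<longleftrightarrow> cycle_edge j a b"
proof -
  have less: "cycle_edge j (j - 1 - a) (j - 1 - b) \<longleftrightarrow> cycle_edge j a b" if "a < b" "b < j" for a b
  proof -
    have "cycle_edge j (j - 1 - a) (j - 1 - b) \<longleftrightarrow> cycle_edge j (j - 1 - b) (j - 1 - a)"
      by (rule cycle_edge_commute)
    also have "\<dots> \<longleftrightarrow> j - 1 - a = Suc (j - 1 - b) \<or> (j - 1 - b = 0 \<and> j - 1 - a = j - 1)"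
      using that by (intro cycle_edge_less_iff) auto
    also have "\<dots> \<longleftrightarrow> b = Suc a \<or> (a = 0 \<and> b = j - 1)"
      using that by arith
    also have "\<dots> \<longleftrightarrow> cycle_edge j a b"
      using that by (simp add: cycle_edge_less_iff)
    finally show ?thesis .
  qed
  consider "a < b" | "a = b" | "b < a"
    by linarith
  then show ?thesis
  proof cases
    case 1
    then show ?thesis
      using assms(2) by (rule less)
  next
    case 2
    then show ?thesis
      using assms cycle_edge_loop_iff[of a j] cycle_edge_loop_iff[of "j - 1 - a" j] by simp
  next
    case 3
    then show ?thesis
      using less[OF 3 assms(1)] cycle_edge_commute[of j a b]
        cycle_edge_commute[of j "j - 1 - a" "j - 1 - b"]
      by blast
  qed
qed

lemma add_mod_cancel_less:
  fixes a b x n :: nat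
  assumes "a < n" "b < n" "(x + a) mod n = (x + b) mod n"
  shows "a = b"
proof -
  have "(x + max a b) mod n = (x + min a b) mod n"
    using assms(3) by (cases "a \<le> b") (auto simp: max_def min_def)
  then have "n dvd (x + max a b) - (x + min a b)"
    by (subst mod_eq_dvd_iff_nat[symmetric]) auto
  moreover have "max a b - min a b < n"
    using assms by auto
  ultimately have "max a b - min a b = 0"
    using nat_dvd_not_less by fastforce
  then show ?thesis
    by auto
qed

lemma numbering_in_path_graph:
  assumes g: "numbering (path_edge n) X P j g"
    and P_rev: "\<And>a b. a < j \<Longrightarrow> b < j \<Longrightarrow> P (j - 1 - a) (j - 1 - b) \<longleftrightarrow> P a b"
    and P_step: "\<And>a. Suc a < j \<Longrightarrow> P a (Suc a)"
  obtains c where "numbering (path_edge n) X P j ((+) c)"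
proof -
  obtain h where h: "numbering (path_edge n) X P j h" "\<And>a. Suc a < j \<Longrightarrow> h (Suc a) = Suc (h a)"
    by (rule numbering_along_successor[OF g P_rev P_step]) (auto dest: path_edge_cases)
  have "a < j \<longrightarrow> h a = h 0 + a" for a
    by (induction a) (auto simp: h(2))
  then have "numbering (path_edge n) X P j ((+) (h 0))"
    by (intro numbering_cong[OF h(1)]) blast
  then show ?thesis
    by (rule that)
qed

lemma numbering_in_cycle_graph:
  assumes g: "numbering (cycle_edge n) X P j g" and X: "X \<subseteq> {0..<n}" and j: "0 < j"
    and P_rev: "\<And>a b. a < j \<Longrightarrow> b < j \<Longrightarrow> P (j - 1 - a) (j - 1 - b) \<longleftrightarrow> P a b"
    and P_step: "\<And>a. Suc a < j \<Longrightarrow> P a (Suc a)"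
  obtains c where "c < n" and "numbering (cycle_edge n) X P j (\<lambda>a. (c + a) mod n)"
proof -
  have inj_succ: "inj_on (\<lambda>y. (y + 1) mod n) X"
  proof (rule inj_onI)
    fix x y assume "x \<in> X" "y \<in> X" "(x + 1) mod n = (y + 1) mod n"
    moreover from X \<open>x \<in> X\<close> \<open>y \<in> X\<close> have "x < n" "y < n"
      by auto
    ultimately show "x = y"
      using add_mod_cancel_less[of x n y 1] by (simp add: add.commute)
  qed
  obtain h where h: "numbering (cycle_edge n) X P j h"
      "\<And>a. Suc a < j \<Longrightarrow> h (Suc a) = (h a + 1) mod n"
    by (rule numbering_along_successor[OF g P_rev P_step inj_succ]) (auto dest: cycle_edge_cases)
  have "h 0 \<in> X"
    using numbering_image[OF h(1)] j by auto
  with X have h0: "h 0 < n"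
    by auto
  have "a < j \<longrightarrow> h a = (h 0 + a) mod n" for a
    by (induction a) (auto simp: h(2) h0 mod_Suc_eq)
  then have "numbering (cycle_edge n) X P j (\<lambda>a. (h 0 + a) mod n)"
    by (intro numbering_cong[OF h(1)]) blast
  with h0 show ?thesis
    by (rule that)
qed

lemma path_copies_in_path_graph:
  assumes j: "1 \<le> j"
  shows "{X. X \<subseteq> {0..<n} \<and> induced_iso (path_edge n) X (path_edge j) {0..<j}}
      = (\<lambda>c. {c..<c + j}) ` {..<n + 1 - j}"
proof (intro equalityI subsetI)
  fix X
  assume "X \<in> {X. X \<subseteq> {0..<n} \<and> induced_iso (path_edge n) X (path_edge j) {0..<j}}"
  then obtain g where X: "X \<subseteq> {0..<n}" and g: "numbering (path_edge n) X (path_edge j) j g"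
    by (auto simp: induced_iso_numbering)
  obtain c where "numbering (path_edge n) X (path_edge j) j ((+) c)"
    using numbering_in_path_graph[OF g path_edge_reverse path_edge_Suc] by blast
  from numbering_image[OF this] have "X = {c..<c + j}"
    by (simp add: add.commute)
  with X j show "X \<in> (\<lambda>c. {c..<c + j}) ` {..<n + 1 - j}"
    by auto
next
  fix X
  assume "X \<in> (\<lambda>c. {c..<c + j}) ` {..<n + 1 - j}"
  then obtain c where c: "c < n + 1 - j" and X: "X = {c..<c + j}"
    by auto
  have "bij_betw ((+) c) {0..<j} X"
    unfolding X by (rule bij_betw_byWitness[where f'="\<lambda>x. x - c"]) auto
  with c have "numbering (path_edge n) X (path_edge j) j ((+) c)"
    unfolding numbering_def path_edge_def by auto
  with c X show "X \<in> {X. X \<subseteq> {0..<n} \<and> induced_iso (path_edge n) X (path_edge j) {0..<j}}"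
    by (auto simp: induced_iso_numbering)
qed

lemma sub_count_path_in_path:
  assumes "1 \<le> j"
  shows "sub_count {0..<n} (path_edge n) {0..<j} (path_edge j) = n + 1 - j"
proof -
  have "inj_on (\<lambda>c. {c..<c + j}) {..<n + 1 - j}"
    by (rule inj_onI, erule atLeastLessThan_inj(1)) (use assms in auto)
  then show ?thesis
    unfolding sub_count_def path_copies_in_path_graph[OF assms] by (simp add: card_image)
qed

lemma sub_count_cycle_in_path:
  assumes k: "3 \<le> k"
  shows "sub_count {0..<n} (path_edge n) {0..<k} (cycle_edge k) = 0"
proof -
  have "\<not> induced_iso (path_edge n) X (cycle_edge k) {0..<k}" for X
  proof
    assume "induced_iso (path_edge n) X (cycle_edge k) {0..<k}"
    then obtain g where "numbering (path_edge n) X (cycle_edge k) k g"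
      by (auto simp: induced_iso_numbering)
    then obtain c where c: "numbering (path_edge n) X (cycle_edge k) k ((+) c)"
      using numbering_in_path_graph[OF _ cycle_edge_reverse cycle_edge_Suc] by blast
    have "path_edge n (c + 0) (c + (k - 1))"
      using numbering_edge[OF c, of 0 "k - 1"] cycle_edge_first_last[OF k] k by simp
    with k show False
      unfolding path_edge_def by auto
  qed
  then show ?thesis
    unfolding sub_count_def by simp
qed

lemma cycle_edge_shift_iff:
  assumes "0 < n"
  shows "cycle_edge n ((c + a) mod n) ((c + b) mod n)
    \<longleftrightarrow> (c + b) mod n = (c + (a + 1)) mod n \<or> (c + a) mod n = (c + (b + 1)) mod n"
  using assms unfolding cycle_edge_def by (simp add: mod_Suc_eq)

definition cycle_arc :: "nat \<Rightarrow> nat \<Rightarrow> nat \<Rightarrow> nat set" where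
  "cycle_arc n j c = (\<lambda>a. (c + a) mod n) ` {0..<j}"

lemma numbering_cycle_arc:
  assumes "j < n"
  shows "numbering (cycle_edge n) (cycle_arc n j c) (path_edge j) j (\<lambda>a. (c + a) mod n)"
proof -
  have "inj_on (\<lambda>a. (c + a) mod n) {0..<j}"
  proof (rule inj_onI)
    fix a b assume "a \<in> {0..<j}" "b \<in> {0..<j}" "(c + a) mod n = (c + b) mod n"
    with assms show "a = b"
      using add_mod_cancel_less[of a n b c] by simp
  qed
  moreover have "cycle_edge n ((c + a) mod n) ((c + b) mod n) \<longleftrightarrow> path_edge j a b"
    if "a < j" "b < j" for a b
  proof -
    have "(c + b) mod n = (c + (a + 1)) mod n \<longleftrightarrow> b = a + 1"
      using add_mod_cancel_less[of b n "a + 1" c] that assms by auto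
    moreover have "(c + a) mod n = (c + (b + 1)) mod n \<longleftrightarrow> a = b + 1"
      using add_mod_cancel_less[of a n "b + 1" c] that assms by auto
    ultimately show ?thesis
      using that assms cycle_edge_shift_iff[of n c a b] unfolding path_edge_def by simp
  qed
  ultimately show ?thesis
    unfolding numbering_def cycle_arc_def bij_betw_def by auto
qed

lemma path_copy_in_cycle_graph:
  assumes n: "3 \<le> n" and j: "1 \<le> j" and X: "X \<subseteq> {0..<n}"
    and iso: "induced_iso (cycle_edge n) X (path_edge j) {0..<j}"
  shows "j < n \<and> (\<exists>c<n. X = cycle_arc n j c)"
proof -
  obtain g where g: "numbering (cycle_edge n) X (path_edge j) j g"
    using iso by (auto simp: induced_iso_numbering)
  obtain c where c: "c < n" and num: "numbering (cycle_edge n) X (path_edge j) j (\<lambda>a. (c + a) mod n)"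
    using numbering_in_cycle_graph[OF g X _ path_edge_reverse path_edge_Suc] j by auto
  have "j \<le> n"
    using numbering_card[OF num] card_mono[OF _ X] by simp
  moreover have "j \<noteq> n"
  proof
    assume "j = n"
    have "(c + 0) mod n = (c + (n - 1 + 1)) mod n"
      using n by simp
    then have "cycle_edge n ((c + (n - 1)) mod n) ((c + 0) mod n)"
      using n cycle_edge_shift_iff[of n c "n - 1" 0] by simp
    then have "path_edge n (n - 1) 0"
      using numbering_edge[OF num, of "n - 1" 0] \<open>j = n\<close> n by simp
    with n show False
      unfolding path_edge_def by simp
  qed
  moreover have "X = cycle_arc n j c"
    using numbering_image[OF num] unfolding cycle_arc_def by simp
  ultimately show ?thesis
    using c by auto
qed

lemma cycle_arc_inj:
  assumes j: "1 \<le> j" and jn: "j < n"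
  shows "inj_on (cycle_arc n j) {0..<n}"
proof (rule inj_onI)
  fix c d assume c: "c \<in> {0..<n}" and d: "d \<in> {0..<n}" and eq: "cycle_arc n j c = cycle_arc n j d"
  have "c \<in> cycle_arc n j c"
    unfolding cycle_arc_def using c j by (auto intro!: image_eqI[where x=0])
  then have "c \<in> cycle_arc n j d"
    using eq by simp
  then obtain a where a: "a < j" "c = (d + a) mod n"
    unfolding cycle_arc_def by auto
  show "c = d"
  proof (cases a)
    case 0
    with a d show ?thesis by simp
  next
    case (Suc a')
    txt \<open>Then the cyclic predecessor of \<open>c\<close> lies in the arc starting at \<open>c\<close>, which forces \<open>j = n\<close>.\<close>
    have "(c + (n - 1)) mod n = (d + a') mod n"
    proof -
      have "(c + (n - 1)) mod n = (d + a + (n - 1)) mod n"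
        using a by (simp add: mod_add_left_eq)
      also have "\<dots> = (d + a' + n) mod n"
        using Suc jn by (simp add: algebra_simps)
      finally show ?thesis by simp
    qed
    moreover have "(d + a') mod n \<in> cycle_arc n j d"
      unfolding cycle_arc_def using a Suc by auto
    ultimately have "(c + (n - 1)) mod n \<in> cycle_arc n j c"
      using eq by simp
    then obtain b where "b < j" "(c + (n - 1)) mod n = (c + b) mod n"
      unfolding cycle_arc_def by auto
    with jn add_mod_cancel_less[of "n - 1" n b c] show ?thesis
      by auto
  qed
qed

lemma sub_count_path_in_cycle:
  assumes n: "3 \<le> n" and j: "1 \<le> j"
  shows "sub_count {0..<n} (cycle_edge n) {0..<j} (path_edge j) = (if j < n then n else 0)"
proof (cases "j < n")
  case True
  have "{X. X \<subseteq> {0..<n} \<and> induced_iso (cycle_edge n) X (path_edge j) {0..<j}} = cycle_arc n j ` {0..<n}"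
  proof (intro equalityI subsetI)
    fix X
    assume "X \<in> {X. X \<subseteq> {0..<n} \<and> induced_iso (cycle_edge n) X (path_edge j) {0..<j}}"
    then obtain c where "c < n" "X = cycle_arc n j c"
      using path_copy_in_cycle_graph[OF n j] by blast
    then show "X \<in> cycle_arc n j ` {0..<n}"
      by auto
  next
    fix X
    assume "X \<in> cycle_arc n j ` {0..<n}"
    then obtain c where "c < n" "X = cycle_arc n j c"
      by auto
    moreover have "cycle_arc n j c \<subseteq> {0..<n}"
      unfolding cycle_arc_def using True by auto
    ultimately show "X \<in> {X. X \<subseteq> {0..<n} \<and> induced_iso (cycle_edge n) X (path_edge j) {0..<j}}"
      using numbering_cycle_arc[OF True] by (auto simp: induced_iso_numbering)
  qed
  with True show ?thesis
    unfolding sub_count_def by (simp add: card_image[OF cycle_arc_inj[OF j True]])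
next
  case False
  then show ?thesis
    unfolding sub_count_def using path_copy_in_cycle_graph[OF n j] by auto
qed

lemma cycle_copy_in_cycle_graph:
  assumes k: "3 \<le> k" and X: "X \<subseteq> {0..<n}"
    and iso: "induced_iso (cycle_edge n) X (cycle_edge k) {0..<k}"
  shows "k = n \<and> X = {0..<n}"
proof -
  obtain g where g: "numbering (cycle_edge n) X (cycle_edge k) k g"
    using iso by (auto simp: induced_iso_numbering)
  obtain c where num: "numbering (cycle_edge n) X (cycle_edge k) k (\<lambda>a. (c + a) mod n)"
    using numbering_in_cycle_graph[OF g X _ cycle_edge_reverse cycle_edge_Suc] k by auto
  have card: "card X = k"
    by (rule numbering_card[OF num])
  with card_mono[OF _ X] have "k \<le> n"
    by simp
  moreover have "\<not> k < n"
  proof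
    assume "k < n"
    have "cycle_edge n ((c + 0) mod n) ((c + (k - 1)) mod n)"
      using numbering_edge[OF num, of 0 "k - 1"] cycle_edge_first_last[OF k] k by simp
    then consider "(c + (k - 1)) mod n = (c + 1) mod n" | "(c + 0) mod n = (c + k) mod n"
      using cycle_edge_shift_iff[of n c 0 "k - 1"] k \<open>k < n\<close> by auto
    then show False
    proof cases
      case 1
      have "k - 1 = 1"
        by (rule add_mod_cancel_less[OF _ _ 1]) (use k \<open>k < n\<close> in auto)
      with k show False
        by simp
    next
      case 2
      have "0 = k"
        by (rule add_mod_cancel_less[OF _ _ 2]) (use \<open>k < n\<close> in auto)
      with k show False
        by simp
    qed
  qed
  ultimately have "k = n"
    by simp
  with card X show ?thesis
    using card_subset_eq[OF _ X] by simp
qed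

lemma sub_count_cycle_in_cycle:
  assumes k: "3 \<le> k"
  shows "sub_count {0..<n} (cycle_edge n) {0..<k} (cycle_edge k) = (if k = n then 1 else 0)"
proof -
  have "{X. X \<subseteq> {0..<n} \<and> induced_iso (cycle_edge n) X (cycle_edge k) {0..<k}}
      = (if k = n then {{0..<n}} else {})"
    using cycle_copy_in_cycle_graph[OF k] induced_iso_refl[of "cycle_edge n" "{0..<n}"] by auto
  then show ?thesis
    unfolding sub_count_def by simp
qed

section \<open>Components of graphs of maximum degree two\<close>

lemma simple_graph_sym: "simple_graph V E \<Longrightarrow> E x y \<Longrightarrow> E y x"
  unfolding simple_graph_def by blast

lemma simple_graph_rtranclp_sym: "simple_graph V E \<Longrightarrow> E\<^sup>*\<^sup>* x y \<Longrightarrow> E\<^sup>*\<^sup>* y x"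
  using symp_rtranclp[of E] simple_graph_sym unfolding symp_def by metis

lemma simple_graph_rtranclp_in_V:
  assumes "simple_graph V E" "E\<^sup>*\<^sup>* x y" "x \<in> V"
  shows "y \<in> V"
  using assms(2,3) by (induction rule: rtranclp_induct) (use assms(1) in \<open>auto simp: simple_graph_def\<close>)

lemma components_subset: "simple_graph V E \<Longrightarrow> C \<in> components V E \<Longrightarrow> C \<subseteq> V"
  unfolding components_def using simple_graph_rtranclp_in_V by fastforce

lemma finite_components: "simple_graph V E \<Longrightarrow> finite (components V E)"
  unfolding components_def simple_graph_def by simp

lemma finite_component:
  assumes "simple_graph V E" "C \<in> components V E"
  shows "finite C"
  using finite_subset[OF components_subset[OF assms]] assms(1) unfolding simple_graph_def by blast

lemma component_closed: "C \<in> components V E \<Longrightarrow> x \<in> C \<Longrightarrow> E x y \<Longrightarrow> y \<in> C"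
  unfolding components_def by (auto intro: rtranclp.rtrancl_into_rtrancl)

lemma component_eq:
  assumes "simple_graph V E" "C \<in> components V E" "x \<in> C"
  shows "C = {u. E\<^sup>*\<^sup>* x u}"
proof -
  obtain v where C: "C = {u. E\<^sup>*\<^sup>* v u}"
    using assms(2) unfolding components_def by blast
  with assms(3) have "E\<^sup>*\<^sup>* v x" "E\<^sup>*\<^sup>* x v"
    using simple_graph_rtranclp_sym[OF assms(1)] by auto
  with C show ?thesis
    by (auto intro: rtranclp_trans)
qed

lemma component_nonempty: "C \<in> components V E \<Longrightarrow> C \<noteq> {}"
  unfolding components_def by auto

lemma max_degree_two_neighbour:
  assumes G: "simple_graph V E" and D: "max_degree_le V E 2"
    and "E x a" "E x b" "E x c" "a \<noteq> b"
  shows "c = a \<or> c = b"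
proof (rule ccontr)
  assume "\<not> (c = a \<or> c = b)"
  with \<open>a \<noteq> b\<close> have "card {a, b, c} = 3"
    by auto
  have "x \<in> V" and "{u. E x u} \<subseteq> V" and "finite V"
    using G assms(3) unfolding simple_graph_def by blast+
  then have "finite {u. E x u}"
    using finite_subset by blast
  moreover have "{a, b, c} \<subseteq> {u. E x u}"
    using assms by auto
  ultimately have "card {a, b, c} \<le> degree E x"
    unfolding degree_def by (simp add: card_mono)
  also have "\<dots> \<le> 2"
    using D \<open>x \<in> V\<close> unfolding max_degree_le_def by blast
  finally show False
    using \<open>card {a, b, c} = 3\<close> by simp
qed

definition vertex_path :: "('a \<Rightarrow> 'a \<Rightarrow> bool) \<Rightarrow> 'a list \<Rightarrow> bool" where
  "vertex_path E xs \<longleftrightarrow> distinct xs \<and> (\<forall>i. Suc i < length xs \<longrightarrow> E (xs ! i) (xs ! Suc i))"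

lemma vertex_path_rev:
  assumes "\<And>x y. E x y \<Longrightarrow> E y x" and "vertex_path E xs"
  shows "vertex_path E (rev xs)"
proof -
  have "E (rev xs ! i) (rev xs ! Suc i)" if "Suc i < length xs" for i
  proof -
    have "E (xs ! (length xs - Suc (Suc i))) (xs ! Suc (length xs - Suc (Suc i)))"
      using assms(2) that unfolding vertex_path_def by simp
    moreover have "Suc (length xs - Suc (Suc i)) = length xs - Suc i"
      using that by simp
    ultimately show ?thesis
      using assms(1) that by (simp add: rev_nth)
  qed
  with assms(2) show ?thesis
    unfolding vertex_path_def by simp
qed

lemma vertex_path_snoc:
  assumes "vertex_path E xs" "xs \<noteq> []" "w \<notin> set xs" "E (last xs) w"
  shows "vertex_path E (xs @ [w])"
proof -
  have "E ((xs @ [w]) ! i) ((xs @ [w]) ! Suc i)" if "Suc i < Suc (length xs)" for i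
  proof (cases "Suc i < length xs")
    case True
    with assms(1) show ?thesis
      unfolding vertex_path_def by (simp add: nth_append)
  next
    case False
    with that have "i = length xs - 1"
      by simp
    with assms(2,4) show ?thesis
      by (simp add: nth_append last_conv_nth)
  qed
  with assms(1,3) show ?thesis
    unfolding vertex_path_def by simp
qed

lemma longest_vertex_path_exists:
  assumes "finite C" "v \<in> C"
  obtains xs where "vertex_path E xs" "set xs \<subseteq> C"
    "\<And>ys. vertex_path E ys \<Longrightarrow> set ys \<subseteq> C \<Longrightarrow> length ys \<le> length xs"
proof -
  let ?P = "{xs. vertex_path E xs \<and> set xs \<subseteq> C}"
  have "?P \<subseteq> {xs. set xs \<subseteq> C \<and> length xs \<le> card C}"
    using assms(1) by (auto simp: vertex_path_def distinct_card[symmetric] intro: card_mono)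
  then have "finite ?P"
    using finite_lists_length_le[OF assms(1)] finite_subset by blast
  moreover have "[v] \<in> ?P"
    using assms(2) by (simp add: vertex_path_def)
  ultimately have "Max (length ` ?P) \<in> length ` ?P"
    by (intro Max_in) auto
  then obtain xs where xs: "xs \<in> ?P" "length xs = Max (length ` ?P)"
    by auto
  have "length ys \<le> length xs" if "ys \<in> ?P" for ys
    unfolding xs(2) using \<open>finite ?P\<close> that by (auto intro: Max_ge)
  with xs(1) show ?thesis
    using that by blast
qed

lemma symmetric_iff_from_less:
  fixes a b n :: nat
  assumes R_sym: "\<And>a b. R a b \<longleftrightarrow> R b a" and S_sym: "\<And>a b. S a b \<longleftrightarrow> S b a"
    and less: "\<And>a b. a < b \<Longrightarrow> b < n \<Longrightarrow> R a b \<longleftrightarrow> S a b"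
    and diag: "\<And>a. a < n \<Longrightarrow> R a a \<longleftrightarrow> S a a"
    and "a < n" "b < n"
  shows "R a b \<longleftrightarrow> S a b"
proof (cases a b rule: linorder_cases)
  case greater
  then show ?thesis
    using less[of b a] R_sym[of a b] S_sym[of a b] \<open>a < n\<close> by simp
qed (use assms in simp_all)

locale longest_vertex_path =
  fixes V :: "'a set" and E :: "'a \<Rightarrow> 'a \<Rightarrow> bool" and C :: "'a set" and xs :: "'a list"
  assumes graph: "simple_graph V E" and degree: "max_degree_le V E 2"
    and component: "C \<in> components V E"
    and path: "vertex_path E xs" and path_in_C: "set xs \<subseteq> C"
    and longest: "\<And>ys. vertex_path E ys \<Longrightarrow> set ys \<subseteq> C \<Longrightarrow> length ys \<le> length xs"
begin

lemma not_Nil: "xs \<noteq> []"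
proof -
  obtain v where "v \<in> C"
    using component_nonempty[OF component] by blast
  then have "vertex_path E [v]" "set [v] \<subseteq> C"
    by (auto simp: vertex_path_def)
  from longest[OF this] show ?thesis
    by auto
qed

lemma nth_eq_iff: "i < length xs \<Longrightarrow> j < length xs \<Longrightarrow> xs ! i = xs ! j \<longleftrightarrow> i = j"
  using path nth_eq_iff_index_eq unfolding vertex_path_def by blast

lemma edge_Suc: "Suc i < length xs \<Longrightarrow> E (xs ! i) (xs ! Suc i)"
  using path unfolding vertex_path_def by blast

lemma last_neighbour:
  assumes "E (last xs) w"
  shows "w \<in> set xs"
proof (rule ccontr)
  assume "w \<notin> set xs"
  have "w \<in> C"
    using component_closed[OF component _ assms] last_in_set[OF not_Nil] path_in_C by blast
  with vertex_path_snoc[OF path not_Nil \<open>w \<notin> set xs\<close> assms] longest[of "xs @ [w]"] path_in_C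
  show False
    by auto
qed

lemma hd_neighbour:
  assumes "E (hd xs) w"
  shows "w \<in> set xs"
proof -
  interpret rev: longest_vertex_path V E C "rev xs"
    using graph degree component vertex_path_rev[OF simple_graph_sym[OF graph] path] path_in_C longest
    by unfold_locales auto
  show ?thesis
    using rev.last_neighbour assms not_Nil by (simp add: last_rev)
qed

lemma inner_neighbour:
  assumes "0 < i" "Suc i < length xs" "E (xs ! i) w"
  shows "w = xs ! (i - 1) \<or> w = xs ! Suc i"
proof (rule max_degree_two_neighbour[OF graph degree _ _ assms(3)])
  have "E (xs ! (i - 1)) (xs ! Suc (i - 1))"
    using assms by (intro edge_Suc) simp
  with assms(1) show "E (xs ! i) (xs ! (i - 1))"
    using simple_graph_sym[OF graph] by simp
  show "E (xs ! i) (xs ! Suc i)"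
    using assms(2) by (rule edge_Suc)
  show "xs ! (i - 1) \<noteq> xs ! Suc i"
    using assms nth_eq_iff by simp
qed

lemma neighbour_in_path:
  assumes "x \<in> set xs" "E x w"
  shows "w \<in> set xs"
proof -
  obtain i where i: "i < length xs" "x = xs ! i"
    using assms(1) by (auto simp: in_set_conv_nth)
  consider "i = 0" | "i = length xs - 1" | "0 < i" "Suc i < length xs"
    using i by linarith
  then show ?thesis
  proof cases
    case 1
    then show ?thesis
      using hd_neighbour assms(2) i not_Nil by (simp add: hd_conv_nth)
  next
    case 2
    then show ?thesis
      using last_neighbour assms(2) i not_Nil by (simp add: last_conv_nth)
  next
    case 3
    with inner_neighbour assms(2) i have "w = xs ! (i - 1) \<or> w = xs ! Suc i"
      by blast
    with 3 show ?thesis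
      by (auto simp: nth_mem)
  qed
qed

lemma set_eq: "set xs = C"
proof
  show "C \<subseteq> set xs"
  proof
    fix u assume "u \<in> C"
    have "hd xs \<in> C"
      using path_in_C not_Nil by auto
    with \<open>u \<in> C\<close> have "E\<^sup>*\<^sup>* (hd xs) u"
      using component_eq[OF graph component] by blast
    then show "u \<in> set xs"
      by (induction rule: rtranclp_induct) (use not_Nil neighbour_in_path in auto)
  qed
qed (rule path_in_C)

lemma edge_iff:
  assumes "i < j" "j < length xs"
  shows "E (xs ! i) (xs ! j) \<longleftrightarrow> j = Suc i \<or> (i = 0 \<and> j = length xs - 1 \<and> E (hd xs) (last xs))"
proof
  assume edge: "E (xs ! i) (xs ! j)"
  show "j = Suc i \<or> (i = 0 \<and> j = length xs - 1 \<and> E (hd xs) (last xs))"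
  proof (cases "i = 0")
    case False
    with assms edge have "xs ! j = xs ! (i - 1) \<or> xs ! j = xs ! Suc i"
      by (intro inner_neighbour) auto
    with assms False nth_eq_iff show ?thesis
      by auto
  next
    case True
    show ?thesis
    proof (rule ccontr)
      assume "\<not> ?thesis"
      with True edge not_Nil have "j \<noteq> 1" "j \<noteq> length xs - 1"
        by (auto simp: hd_conv_nth last_conv_nth)
      with True assms have "1 < j" "Suc j < length xs"
        by auto
      moreover have "E (xs ! j) (xs ! 0)"
        using edge True simple_graph_sym[OF graph] by simp
      ultimately have "xs ! 0 = xs ! (j - 1) \<or> xs ! 0 = xs ! Suc j"
        by (intro inner_neighbour) auto
      moreover have "xs ! 0 \<noteq> xs ! (j - 1)" "xs ! 0 \<noteq> xs ! Suc j"
        using nth_eq_iff[of 0 "j - 1"] nth_eq_iff[of 0 "Suc j"] \<open>1 < j\<close> \<open>Suc j < length xs\<close>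
          not_Nil
        by simp_all
      ultimately show False
        by blast
    qed
  qed
next
  assume "j = Suc i \<or> (i = 0 \<and> j = length xs - 1 \<and> E (hd xs) (last xs))"
  with assms not_Nil show "E (xs ! i) (xs ! j)"
    using edge_Suc by (auto simp: hd_conv_nth last_conv_nth)
qed

lemma numbering_path_or_cycle:
  defines "L \<equiv> length xs"
  shows "numbering E C (path_edge L) L ((!) xs) \<or> (3 \<le> L \<and> numbering E C (cycle_edge L) L ((!) xs))"
proof -
  have bij: "bij_betw ((!) xs) {0..<L} C"
    using path set_eq unfolding vertex_path_def L_def by (intro bij_betw_nth) auto
  have E_sym: "E (xs ! a) (xs ! b) \<longleftrightarrow> E (xs ! b) (xs ! a)" for a b
    using simple_graph_sym[OF graph] by blast
  have E_irrefl: "\<not> E x x" for x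
    using graph unfolding simple_graph_def by blast
  show ?thesis
  proof (cases "3 \<le> L \<and> E (hd xs) (last xs)")
    case True
    have "E (xs ! a) (xs ! b) \<longleftrightarrow> cycle_edge L a b" if "a < L" "b < L" for a b
    proof (rule symmetric_iff_from_less[OF E_sym cycle_edge_commute _ _ that])
      show "E (xs ! a) (xs ! b) \<longleftrightarrow> cycle_edge L a b" if "a < b" "b < L" for a b
      proof -
        have "E (xs ! a) (xs ! b) \<longleftrightarrow> b = Suc a \<or> (a = 0 \<and> b = L - 1 \<and> E (hd xs) (last xs))"
          using edge_iff[OF that(1)] that(2) unfolding L_def by blast
        also have "\<dots> \<longleftrightarrow> cycle_edge L a b"
          using cycle_edge_less_iff[OF that] True by blast
        finally show ?thesis .
      qed
      show "E (xs ! a) (xs ! a) \<longleftrightarrow> cycle_edge L a a" if "a < L" for a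
        using that True E_irrefl cycle_edge_loop_iff by auto
    qed
    with bij True show ?thesis
      unfolding numbering_def by blast
  next
    case False
    have "E (xs ! a) (xs ! b) \<longleftrightarrow> path_edge L a b" if "a < L" "b < L" for a b
    proof (rule symmetric_iff_from_less[OF E_sym _ _ _ that])
      show "path_edge L a b \<longleftrightarrow> path_edge L b a" for a b
        unfolding path_edge_def by auto
      show "E (xs ! a) (xs ! b) \<longleftrightarrow> path_edge L a b" if "a < b" "b < L" for a b
      proof -
        have "E (xs ! a) (xs ! b) \<longleftrightarrow> b = Suc a \<or> (a = 0 \<and> b = L - 1 \<and> E (hd xs) (last xs))"
          using edge_iff[OF that(1)] that(2) unfolding L_def by blast
        also have "\<dots> \<longleftrightarrow> b = Suc a"
          using False that by auto
        also have "\<dots> \<longleftrightarrow> path_edge L a b"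
          using that unfolding path_edge_def by auto
        finally show ?thesis .
      qed
      show "E (xs ! a) (xs ! a) \<longleftrightarrow> path_edge L a a" if "a < L" for a
        using E_irrefl unfolding path_edge_def by auto
    qed
    with bij show ?thesis
      unfolding numbering_def by blast
  qed
qed

end

lemma component_numbering:
  assumes graph: "simple_graph V E" and degree: "max_degree_le V E 2"
    and component: "C \<in> components V E"
  obtains n g where "numbering E C (path_edge n) n g"
  | n g where "3 \<le> n" "numbering E C (cycle_edge n) n g"
proof -
  note finite_component[OF graph component]
  moreover obtain v where "v \<in> C"
    using component_nonempty[OF component] by blast
  ultimately obtain xs where "vertex_path E xs" "set xs \<subseteq> C"
    "\<And>ys. vertex_path E ys \<Longrightarrow> set ys \<subseteq> C \<Longrightarrow> length ys \<le> length xs"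
    by (rule longest_vertex_path_exists[where E = E]) blast
  then interpret longest_vertex_path V E C xs
    using graph degree component by unfold_locales
  show ?thesis
    using numbering_path_or_cycle that by blast
qed

section \<open>Counting over components\<close>

lemma numbering_reachable:
  assumes g: "numbering E X F j g" and F_step: "\<And>a. Suc a < j \<Longrightarrow> F a (Suc a)" and "a < j"
  shows "E\<^sup>*\<^sup>* (g 0) (g a)"
  using \<open>a < j\<close>
proof (induction a)
  case (Suc a)
  then have "E (g a) (g (Suc a))"
    using numbering_edge[OF g] F_step by simp
  with Suc show ?case
    by (simp add: rtranclp.rtrancl_into_rtrancl)
qed simp

lemma sub_count_sum_components:
  assumes graph: "simple_graph V E" and j: "0 < j" and F_step: "\<And>a. Suc a < j \<Longrightarrow> F a (Suc a)"
  shows "sub_count V E {0..<j} F = (\<Sum>C\<in>components V E. sub_count C E {0..<j} F)"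
proof -
  let ?copies = "\<lambda>A. {X. X \<subseteq> A \<and> induced_iso E X F {0..<j}}"
  have connected: "\<exists>x\<in>X. X \<subseteq> {u. E\<^sup>*\<^sup>* x u}" if copy: "induced_iso E X F {0..<j}" for X
  proof -
    obtain g where g: "numbering E X F j g"
      using copy unfolding induced_iso_numbering by blast
    show ?thesis
    proof
      show "g 0 \<in> X" and "X \<subseteq> {u. E\<^sup>*\<^sup>* (g 0) u}"
        using numbering_image[OF g] numbering_reachable[OF g F_step] j by auto
    qed
  qed
  have "?copies V = (\<Union>C\<in>components V E. ?copies C)"
  proof (intro equalityI subsetI)
    fix X assume X: "X \<in> ?copies V"
    with connected obtain x where "x \<in> X" "X \<subseteq> {u. E\<^sup>*\<^sup>* x u}"
      by blast
    moreover from X \<open>x \<in> X\<close> have "{u. E\<^sup>*\<^sup>* x u} \<in> components V E"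
      unfolding components_def by auto
    ultimately show "X \<in> (\<Union>C\<in>components V E. ?copies C)"
      using X by blast
  qed (use components_subset[OF graph] in blast)
  moreover have "finite (?copies C)" if "C \<in> components V E" for C
    using finite_component[OF graph that]
    by (rule finite_subset[rotated, OF iffD2[OF finite_Pow_iff]]) auto
  moreover have "?copies C1 \<inter> ?copies C2 = {}"
    if "C1 \<in> components V E" "C2 \<in> components V E" "C1 \<noteq> C2" for C1 C2
  proof (rule ccontr)
    assume "?copies C1 \<inter> ?copies C2 \<noteq> {}"
    then obtain X where X: "X \<subseteq> C1" "X \<subseteq> C2" "induced_iso E X F {0..<j}"
      by blast
    then obtain x where "x \<in> X"
      using connected by blast
    with X have "C1 = {u. E\<^sup>*\<^sup>* x u}" "C2 = {u. E\<^sup>*\<^sup>* x u}"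
      using component_eq[OF graph] that by blast+
    with \<open>C1 \<noteq> C2\<close> show False
      by simp
  qed
  ultimately show ?thesis
    unfolding sub_count_def using finite_components[OF graph] by (simp add: card_UN_disjoint)
qed

lemma path_count_sum_components:
  "simple_graph V E \<Longrightarrow> 0 < j \<Longrightarrow> path_count V E j = (\<Sum>C\<in>components V E. path_count C E j)"
  unfolding path_count_def path_verts_def by (rule sub_count_sum_components) (auto intro: path_edge_Suc)

lemma cycle_count_sum_components:
  "simple_graph V E \<Longrightarrow> cycle_count V E k = (\<Sum>C\<in>components V E. cycle_count C E k)"
  unfolding cycle_count_def by (auto intro: sub_count_sum_components cycle_edge_Suc)

lemma path_count_of_path_numbering:
  "numbering E C (path_edge n) n g \<Longrightarrow> 1 \<le> j \<Longrightarrow> path_count C E j = n + 1 - j"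
  unfolding path_count_def path_verts_def
  by (simp add: sub_count_numbering sub_count_path_in_path)

lemma cycle_count_of_path_numbering:
  "numbering E C (path_edge n) n g \<Longrightarrow> cycle_count C E k = 0"
  unfolding cycle_count_def by (simp add: sub_count_numbering sub_count_cycle_in_path)

lemma induced_path_of_path_numbering_iff:
  assumes g: "numbering E C (path_edge n) n g"
  shows "induced_iso E C (path_edge j) (path_verts j) \<longleftrightarrow> j = n"
proof
  assume "induced_iso E C (path_edge j) (path_verts j)"
  with numbering_card[OF g] show "j = n"
    unfolding path_verts_def by (auto dest: induced_iso_card)
next
  assume "j = n"
  with g show "induced_iso E C (path_edge j) (path_verts j)"
    unfolding path_verts_def by (auto simp: induced_iso_numbering)
qed

lemma path_count_of_cycle_numbering:
  "numbering E C (cycle_edge n) n g \<Longrightarrow> 3 \<le> n \<Longrightarrow> 1 \<le> j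
    \<Longrightarrow> path_count C E j = (if j < n then n else 0)"
  unfolding path_count_def path_verts_def
  by (simp add: sub_count_numbering sub_count_path_in_cycle)

lemma cycle_count_of_cycle_numbering:
  "numbering E C (cycle_edge n) n g \<Longrightarrow> 3 \<le> n \<Longrightarrow> cycle_count C E k = (if k = n then 1 else 0)"
  unfolding cycle_count_def by (simp add: sub_count_numbering sub_count_cycle_in_cycle)

lemma not_induced_path_of_cycle_numbering:
  assumes g: "numbering E C (cycle_edge n) n g" and n: "3 \<le> n"
  shows "\<not> induced_iso E C (path_edge j) (path_verts j)"
proof
  assume iso: "induced_iso E C (path_edge j) (path_verts j)"
  with numbering_card[OF g] have "j = n"
    unfolding path_verts_def by (auto dest: induced_iso_card)
  from iso have "induced_iso (cycle_edge n) {0..<n} (path_edge j) {0..<j}"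
    using numbering_induced_iso_image[OF g, of "{0..<n}"] numbering_image[OF g]
    unfolding path_verts_def by blast
  with n \<open>j = n\<close> show False
    using path_copy_in_cycle_graph[of n j "{0..<n}"] by simp
qed

lemma component_long_path_indicator:
  assumes graph: "simple_graph V E" and degree: "max_degree_le V E 2"
    and component: "C \<in> components V E" and k: "2 \<le> k"
  shows "int (path_count C E (k - 1)) - int (path_count C E k) - int k * int (cycle_count C E k)
    = of_bool (\<exists>j\<ge>k - 1. induced_iso E C (path_edge j) (path_verts j))"
  using component_numbering[OF graph degree component]
proof cases
  case (1 n g)
  have "(\<exists>j\<ge>k - 1. induced_iso E C (path_edge j) (path_verts j)) \<longleftrightarrow> k - 1 \<le> n"
    using induced_path_of_path_numbering_iff[OF 1] by auto
  moreover have "path_count C E (k - 1) = n + 1 - (k - 1)" "path_count C E k = n + 1 - k"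
    using path_count_of_path_numbering[OF 1] k by auto
  ultimately show ?thesis
    using cycle_count_of_path_numbering[OF 1] k by (cases "k - 1 \<le> n") auto
next
  case (2 n g)
  have "path_count C E (k - 1) = (if k - 1 < n then n else 0)" "path_count C E k = (if k < n then n else 0)"
    using path_count_of_cycle_numbering[OF 2(2,1)] k by auto
  then show ?thesis
    using cycle_count_of_cycle_numbering[OF 2(2,1)] not_induced_path_of_cycle_numbering[OF 2(2,1)] k
    by (cases "k < n") auto
qed

theorem lemma4p2:
  fixes V :: "'a set" and E :: "'a \<Rightarrow> 'a \<Rightarrow> bool" and k :: nat
  assumes "simple_graph V E" and "max_degree_le V E 2" and "k \<ge> 2"
  shows "int (long_path_components V E (k - 1)) =
           int (path_count V E (k - 1)) - int (path_count V E k) - int k * int (cycle_count V E k)"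
proof -
  let ?long = "\<lambda>C. \<exists>j\<ge>k - 1. induced_iso E C (path_edge j) (path_verts j)"
  note finite_components[OF assms(1)]
  moreover have "{C \<in> components V E. ?long C} = components V E \<inter> {C. ?long C}"
    by blast
  ultimately have "int (long_path_components V E (k - 1)) = (\<Sum>C\<in>components V E. of_bool (?long C))"
    unfolding long_path_components_def by simp
  also have "\<dots> = (\<Sum>C\<in>components V E.
      int (path_count C E (k - 1)) - int (path_count C E k) - int k * int (cycle_count C E k))"
    by (rule sum.cong[OF refl]) (use component_long_path_indicator[OF assms(1,2) _ assms(3)] in simp)
  also have "\<dots> = int (\<Sum>C\<in>components V E. path_count C E (k - 1))
      - int (\<Sum>C\<in>components V E. path_count C E k) - int k * int (\<Sum>C\<in>components V E. cycle_count C E k)"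
    by (simp add: sum_subtractf sum_distrib_left)
  also have "\<dots> = int (path_count V E (k - 1)) - int (path_count V E k) - int k * int (cycle_count V E k)"
    using assms(1,3) path_count_sum_components[of V E "k - 1"] path_count_sum_components[of V E k]
      cycle_count_sum_components[of V E k]
    by simp
  finally show ?thesis .
qed

end
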